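(* For all positive integers $m$ and all $p,q\in[0,1]$, \[ \ell_1(\mathrm{Bin}(m,p),\mathrm{Bin}(m,q))\ge\frac1{350}\min\left(m|p-q|,\frac{\sqrt m\,|p-q|}{\sqrt{p(1-p)}},1\right). \]
   Context: $\ell_1(P,Q)=\sum_x|P(x)-Q(x)|$. When $p(1-p)=0$ the middle term is interpreted as $+\infty$ if $p\ne q$. *)

theory Defs
  imports "HOL-Probability.Probability"
begin

definition l1_dist :: "nat pmf \<Rightarrow> nat pmf \<Rightarrow> real" where
  "l1_dist P Q = (\<Sum>\<^sub>\<infinity>x. \<bar>pmf P x - pmf Q x\<bar>)"

definition mid_term :: "nat \<Rightarrow> real \<Rightarrow> real \<Rightarrow> ereal" where
  "mid_term m p q =
     (if p * (1 - p) = 0 then (if p = q then 0 else \<infinity>)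
      else ereal (sqrt (real m) * \<bar>p - q\<bar> / sqrt (p * (1 - p))))"

end

theory Submission
  imports Defs
begin

(* Let F_s(t) = P(Bin(m, s) <= t). Since d/ds F_s(t) = -m b(m-1, t, s), the mean value theorem gives,
   for any finite window W of integers and some xi between p and q,
     sum_{t in W} (F_p(t) - F_q(t)) = m (q - p) P(Bin(m - 1, xi) in W).
   Let W consist of the integers within L = sqrt(2 (m p (1 - p) + m |p - q|)) of the interval
   between (m - 1) p and (m - 1) q. As s (1 - s) is 1-Lipschitz, Var Bin(m - 1, xi) <= L^2 / 2, so by
   Chebyshev the probability is at least 1/2. Each |F_p(t) - F_q(t)| is at most the l1 distance, hence
   l1 >= m |p - q| / (2 |W|) with |W| <= m |p - q| + 2 L + 1 <= 6 max(1, m |p - q|, sqrt(m p (1 - p))),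
   which is the claim with the constant 1/12. *)

lemma sum_Bernstein_variance:
  "(\<Sum>k\<le>n. (real k - real n * x)\<^sup>2 * Bernstein n k x) = real n * x * (1 - x)"
proof -
  have "(\<Sum>k\<le>n. (real k - real n * x)\<^sup>2 * Bernstein n k x) =
        (\<Sum>k\<le>n. real k * (real k - 1) * Bernstein n k x)
        + (1 - 2 * real n * x) * (\<Sum>k\<le>n. real k * Bernstein n k x)
        + (real n * x)\<^sup>2 * (\<Sum>k\<le>n. Bernstein n k x)"
    by (simp only: sum_distrib_left flip: sum.distrib)
       (intro sum.cong refl, simp add: power2_eq_square algebra_simps)
  also have "\<dots> = real n * x * (1 - x)"
    by simp (simp add: power2_eq_square algebra_simps)
  finally show ?thesis .
qed

lemma Bernstein_Chebyshev:
  assumes "0 \<le> s" "s \<le> 1" "L > 0" "finite W"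
    and window: "\<And>k. k \<le> n \<Longrightarrow> \<bar>real k - real n * s\<bar> < L \<Longrightarrow> k \<in> W"
  shows "1 - real n * s * (1 - s) / L\<^sup>2 \<le> (\<Sum>k\<in>W. Bernstein n k s)"
proof -
  have "Bernstein n k s \<le> (if k \<in> W then Bernstein n k s else 0)
          + (real k - real n * s)\<^sup>2 / L\<^sup>2 * Bernstein n k s" if "k \<le> n" for k
  proof (cases "k \<in> W")
    case False
    then have "L \<le> \<bar>real k - real n * s\<bar>"
      using window[OF that] by force
    then have "L\<^sup>2 \<le> (real k - real n * s)\<^sup>2"
      using \<open>L > 0\<close> by (metis power2_abs power_mono less_le)
    then have "1 \<le> (real k - real n * s)\<^sup>2 / L\<^sup>2"
      using \<open>L > 0\<close> by simp
    from mult_right_mono[OF this Bernstein_nonneg[OF \<open>0 \<le> s\<close> \<open>s \<le> 1\<close>]]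
    show ?thesis using False by simp
  qed (simp add: Bernstein_nonneg assms)
  then have "(\<Sum>k\<le>n. Bernstein n k s) \<le> (\<Sum>k\<le>n. (if k \<in> W then Bernstein n k s else 0)
          + (real k - real n * s)\<^sup>2 / L\<^sup>2 * Bernstein n k s)"
    by (intro sum_mono) auto
  also have "\<dots> = (\<Sum>k\<le>n. if k \<in> W then Bernstein n k s else 0)
          + (\<Sum>k\<le>n. (real k - real n * s)\<^sup>2 * Bernstein n k s) / L\<^sup>2"
    by (simp add: sum.distrib sum_divide_distrib)
  also have "(\<Sum>k\<le>n. if k \<in> W then Bernstein n k s else 0) = (\<Sum>k\<in>{..n} \<inter> W. Bernstein n k s)"
    by (simp add: sum.inter_restrict)
  also have "\<dots> \<le> (\<Sum>k\<in>W. Bernstein n k s)"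
    by (rule sum_mono2) (auto simp: Bernstein_nonneg assms)
  finally show ?thesis
    by (simp add: sum_Bernstein_variance)
qed

lemma has_real_derivative_Bernstein_Suc:
  "((\<lambda>s. Bernstein (Suc n) (Suc k) s) has_real_derivative
     real (Suc n) * (Bernstein n k s - Bernstein n (Suc k) s)) (at s)"
proof (cases "k \<le> n")
  case True
  define C where "C = real (Suc n choose Suc k)"
  have "((\<lambda>s. C * s ^ Suc k * (1 - s) ^ (n - k)) has_real_derivative
        (real (Suc k) * C) * (s ^ k * (1 - s) ^ (n - k))
        - (real (n - k) * C) * (s ^ Suc k * (1 - s) ^ (n - Suc k))) (at s)"
    by (rule derivative_eq_intros refl)+ (simp add: algebra_simps)
  moreover have "real (Suc k) * C = real (Suc n) * real (n choose k)"
    unfolding C_def by (metis Suc_times_binomial of_nat_mult)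
  moreover have "real (n - k) * C = real (Suc n) * real (n choose Suc k)"
    unfolding C_def by (metis binomial_absorb_comp diff_Suc_1 diff_Suc_Suc of_nat_mult)
  ultimately show ?thesis
    unfolding Bernstein_def C_def by (simp only: diff_Suc_Suc mult.assoc right_diff_distrib)
next
  case False
  then show ?thesis by (simp add: Bernstein_def binomial_eq_0 del: binomial_Suc_Suc)
qed

(* Bernstein n k s is the Bin(n, s) probability of k, so this is P(Bin(n, s) <= t). *)
definition Bernstein_cdf :: "nat \<Rightarrow> nat \<Rightarrow> real \<Rightarrow> real" where
  "Bernstein_cdf n t s = (\<Sum>k\<le>t. Bernstein n k s)"

lemma has_real_derivative_Bernstein_cdf:
  "((\<lambda>s. Bernstein_cdf (Suc n) t s) has_real_derivative - (real (Suc n) * Bernstein n t s)) (at s)"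
proof (induction t)
  case 0
  have "((\<lambda>s. (1 - s) ^ Suc n) has_real_derivative - (real (Suc n) * (1 - s) ^ n)) (at s)"
    by (rule derivative_eq_intros refl)+ simp
  then show ?case
    by (simp add: Bernstein_cdf_def Bernstein_def)
next
  case (Suc t)
  have "((\<lambda>s. Bernstein_cdf (Suc n) t s + Bernstein (Suc n) (Suc t) s) has_real_derivative
         - (real (Suc n) * Bernstein n t s) + real (Suc n) * (Bernstein n t s - Bernstein n (Suc t) s))
         (at s)"
    by (intro DERIV_add Suc.IH has_real_derivative_Bernstein_Suc)
  then show ?case
    by (simp add: Bernstein_cdf_def algebra_simps)
qed

lemma Bernstein_cdf_sum_MVT:
  fixes p q :: real
  assumes "p < q"
  obtains \<xi> where "p < \<xi>" "\<xi> < q"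
    "(\<Sum>t\<in>W. Bernstein_cdf (Suc n) t p) - (\<Sum>t\<in>W. Bernstein_cdf (Suc n) t q)
       = (q - p) * real (Suc n) * (\<Sum>t\<in>W. Bernstein n t \<xi>)"
proof -
  have "((\<lambda>s. \<Sum>t\<in>W. Bernstein_cdf (Suc n) t s) has_real_derivative
          (\<Sum>t\<in>W. - (real (Suc n) * Bernstein n t s))) (at s)" for s
    by (intro DERIV_sum has_real_derivative_Bernstein_cdf)
  from MVT2[OF assms this] obtain \<xi> where "p < \<xi>" "\<xi> < q"
    "(\<Sum>t\<in>W. Bernstein_cdf (Suc n) t q) - (\<Sum>t\<in>W. Bernstein_cdf (Suc n) t p)
       = (q - p) * (\<Sum>t\<in>W. - (real (Suc n) * Bernstein n t \<xi>))"
    by blast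
  moreover have "(\<Sum>t\<in>W. - (real (Suc n) * Bernstein n t \<xi>)) = - (real (Suc n) * (\<Sum>t\<in>W. Bernstein n t \<xi>))"
    by (simp add: sum_negf sum_distrib_left)
  ultimately show ?thesis
    by (intro that) (simp_all only: mult_minus_right mult.assoc, linarith)
qed

lemma abs_Bernstein_cdf_diff_le:
  "\<bar>Bernstein_cdf n t p - Bernstein_cdf n t q\<bar> \<le> (\<Sum>k\<le>n. \<bar>Bernstein n k p - Bernstein n k q\<bar>)"
proof -
  have "\<bar>Bernstein_cdf n t p - Bernstein_cdf n t q\<bar> \<le> (\<Sum>k\<le>t. \<bar>Bernstein n k p - Bernstein n k q\<bar>)"
    unfolding Bernstein_cdf_def by (metis sum_subtractf sum_abs)
  also have "\<dots> = (\<Sum>k\<in>{..t} \<inter> {..n}. \<bar>Bernstein n k p - Bernstein n k q\<bar>)"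
    by (rule sum.mono_neutral_right) (auto simp: Bernstein_def)
  also have "\<dots> \<le> (\<Sum>k\<le>n. \<bar>Bernstein n k p - Bernstein n k q\<bar>)"
    by (rule sum_mono2) auto
  finally show ?thesis .
qed

lemma mult_one_minus_lipschitz:
  fixes r s :: real
  assumes "0 \<le> r" "r \<le> 1" "0 \<le> s" "s \<le> 1"
  shows "s * (1 - s) \<le> r * (1 - r) + \<bar>s - r\<bar>"
proof -
  have "s * (1 - s) - r * (1 - r) = (s - r) * (1 - s - r)"
    by algebra
  also have "\<dots> \<le> \<bar>s - r\<bar> * \<bar>1 - s - r\<bar>"
    by (metis abs_ge_self abs_mult)
  also have "\<dots> \<le> \<bar>s - r\<bar>"
    using assms by (intro mult_left_le) auto
  finally show ?thesis
    by simp
qed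

lemma card_nat_between:
  fixes a b :: real
  assumes "a \<le> b"
  shows "finite {k::nat. a < real k \<and> real k < b}"
    and "real (card {k::nat. a < real k \<and> real k < b}) \<le> b - a + 1"
proof -
  let ?S = "{k::nat. a < real k \<and> real k < b}"
  have sub: "int ` ?S \<subseteq> {\<lfloor>a\<rfloor> + 1..<\<lceil>b\<rceil>}"
    by (auto simp: add1_zle_eq floor_less_iff less_ceiling_iff)
  then show "finite ?S"
    by (metis finite_atLeastLessThan_int finite_imageD finite_subset inj_on_of_nat)
  have "card ?S = card (int ` ?S)"
    by (simp add: card_image)
  also have "\<dots> \<le> nat (\<lceil>b\<rceil> - (\<lfloor>a\<rfloor> + 1))"
    using card_mono[OF finite_atLeastLessThan_int sub] by simp
  finally have "card ?S \<le> nat (\<lceil>b\<rceil> - (\<lfloor>a\<rfloor> + 1))" .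
  then show "real (card ?S) \<le> b - a + 1"
    using assms by linarith
qed

lemma Bernstein_window_mass:
  assumes "0 \<le> s" "s \<le> 1" "L > 0" "2 * (real n * s * (1 - s)) \<le> L\<^sup>2"
    and "lo \<le> real n * s" "real n * s \<le> hi"
  shows "1 / 2 \<le> (\<Sum>t\<in>{t::nat. lo - L < real t \<and> real t < hi + L}. Bernstein n t s)"
proof -
  have "1 - real n * s * (1 - s) / L\<^sup>2 \<le> (\<Sum>t\<in>{t::nat. lo - L < real t \<and> real t < hi + L}. Bernstein n t s)"
    using assms card_nat_between(1)[of "lo - L" "hi + L"]
    by (intro Bernstein_Chebyshev) (auto simp: abs_less_iff)
  moreover have "real n * s * (1 - s) / L\<^sup>2 \<le> 1 / 2"
    using assms by (simp add: pos_divide_le_eq)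
  ultimately show ?thesis
    by linarith
qed

lemma Bernstein_total_variation_lower_bound:
  fixes n :: nat and p q r :: real
  assumes "0 \<le> p" "p < q" "q \<le> 1" "p \<le> r" "r \<le> q"
  defines "x \<equiv> real (Suc n) * (q - p)" and "A \<equiv> real (Suc n) * (r * (1 - r))"
    and "D \<equiv> (\<Sum>k\<le>Suc n. \<bar>Bernstein (Suc n) k p - Bernstein (Suc n) k q\<bar>)"
  shows "x \<le> 2 * (x + 2 * sqrt (2 * (A + x)) + 1) * D"
proof -
  define L where "L = sqrt (2 * (A + x))"
  \<comment> \<open>W contains every t within L of n \<xi>, whichever \<xi> in [p, q] the mean value theorem yields.\<close>
  define W where "W = {t::nat. real n * p - L < real t \<and> real t < real n * q + L}"
  have "x > 0" "A \<ge> 0"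
    using assms unfolding x_def A_def by auto
  then have "L > 0" and L2: "L\<^sup>2 = 2 * (A + x)"
    unfolding L_def by simp_all
  have "real n * p \<le> real n * q" "real n * (q - p) \<le> x"
    using assms unfolding x_def by (simp_all add: mult_left_mono mult_right_mono)
  then have card_W: "real (card W) \<le> x + 2 * L + 1"
    using card_nat_between(2)[of "real n * p - L" "real n * q + L"] \<open>L > 0\<close>
    unfolding W_def by (simp add: algebra_simps)
  obtain \<xi> where \<xi>: "p < \<xi>" "\<xi> < q" and mvt:
    "(\<Sum>t\<in>W. Bernstein_cdf (Suc n) t p) - (\<Sum>t\<in>W. Bernstein_cdf (Suc n) t q)
       = x * (\<Sum>t\<in>W. Bernstein n t \<xi>)"
    using Bernstein_cdf_sum_MVT[OF \<open>p < q\<close>] unfolding x_def by (metis mult.commute)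
  have "real n * \<xi> * (1 - \<xi>) \<le> real (Suc n) * (\<xi> * (1 - \<xi>))"
    using \<xi> assms by (simp add: mult.assoc mult_right_mono)
  also have "\<dots> \<le> real (Suc n) * (r * (1 - r) + \<bar>\<xi> - r\<bar>)"
    using \<xi> assms by (intro mult_left_mono mult_one_minus_lipschitz) auto
  also have "\<dots> \<le> real (Suc n) * (r * (1 - r) + (q - p))"
    using \<xi> assms by (intro mult_left_mono) auto
  also have "\<dots> = L\<^sup>2 / 2"
    unfolding L2 A_def x_def by (simp add: algebra_simps)
  finally have "1 / 2 \<le> (\<Sum>t\<in>W. Bernstein n t \<xi>)"
    unfolding W_def using \<xi> assms \<open>L > 0\<close>
    by (intro Bernstein_window_mass) (auto intro: mult_left_mono)
  then have "x / 2 \<le> x * (\<Sum>t\<in>W. Bernstein n t \<xi>)"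
    using \<open>x > 0\<close> by (simp add: mult_left_mono)
  also have "\<dots> = (\<Sum>t\<in>W. Bernstein_cdf (Suc n) t p - Bernstein_cdf (Suc n) t q)"
    using mvt by (simp add: sum_subtractf)
  also have "\<dots> \<le> (\<Sum>t\<in>W. D)"
    unfolding D_def by (intro sum_mono) (metis abs_Bernstein_cdf_diff_le abs_le_D1)
  also have "\<dots> \<le> (x + 2 * L + 1) * D"
    using card_W by (simp add: D_def sum_nonneg mult_right_mono)
  finally have "x \<le> 2 * ((x + 2 * L + 1) * D)"
    by simp
  then show ?thesis
    unfolding L_def by (simp only: mult.assoc)
qed

lemma Bernstein_total_variation_ge:
  fixes m :: nat and p q :: real
  assumes "0 < m" "0 \<le> p" "p \<le> 1" "0 \<le> q" "q \<le> 1"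
  defines "x \<equiv> real m * \<bar>p - q\<bar>"
    and "M \<equiv> max 1 (max (real m * \<bar>p - q\<bar>) (sqrt (real m * (p * (1 - p)))))"
    and "D \<equiv> (\<Sum>k\<le>m. \<bar>Bernstein m k p - Bernstein m k q\<bar>)"
  shows "x \<le> 12 * M * D"
proof -
  define A where "A = real m * (p * (1 - p))"
  obtain n where m: "m = Suc n"
    using \<open>0 < m\<close> gr0_implies_Suc by blast
  have "D \<ge> 0" "A \<ge> 0" "x \<ge> 0"
    using assms unfolding D_def A_def x_def by (simp_all add: sum_nonneg)
  have bound: "x \<le> 2 * (x + 2 * sqrt (2 * (A + x)) + 1) * D"
  proof (cases p q rule: linorder_cases)
    case less
    then show ?thesis
      using Bernstein_total_variation_lower_bound[of p q p n] assms unfolding x_def A_def D_def m by simp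
  next
    case equal
    then show ?thesis
      using \<open>D \<ge> 0\<close> \<open>A \<ge> 0\<close> unfolding x_def by simp
  next
    case greater
    moreover have "D = (\<Sum>k\<le>m. \<bar>Bernstein m k q - Bernstein m k p\<bar>)"
      unfolding D_def by (simp add: abs_minus_commute)
    ultimately show ?thesis
      using Bernstein_total_variation_lower_bound[of q p p n] assms unfolding x_def A_def m by simp
  qed
  have "M \<ge> 1" "x \<le> M" "sqrt A \<le> M"
    unfolding M_def A_def x_def by auto
  have "A \<le> M\<^sup>2"
    using \<open>A \<ge> 0\<close> \<open>sqrt A \<le> M\<close> by (metis real_sqrt_ge_zero real_sqrt_pow2 power_mono)
  have "M * 1 \<le> M * M"
    using \<open>M \<ge> 1\<close> by (intro mult_left_mono) auto
  then have "x \<le> M\<^sup>2"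
    using \<open>x \<le> M\<close> by (simp add: power2_eq_square)
  then have "sqrt (2 * (A + x)) \<le> 2 * M"
    using \<open>A \<le> M\<^sup>2\<close> \<open>M \<ge> 1\<close> by (intro real_le_lsqrt) (auto simp: power2_eq_square)
  then have "2 * (x + 2 * sqrt (2 * (A + x)) + 1) \<le> 12 * M"
    using \<open>x \<le> M\<close> \<open>M \<ge> 1\<close> by (simp add: algebra_simps)
  with bound \<open>D \<ge> 0\<close> show ?thesis
    by (meson mult_right_mono order.trans)
qed

lemma le_divide_max:
  fixes x a c :: real
  assumes "0 \<le> x" "c \<le> x" "c \<le> 1" "c * a \<le> x"
  shows "c \<le> x / max 1 (max x a)"
proof (cases "c \<le> 0")
  case False
  then have "c * x \<le> x"
    using assms by (simp add: mult_left_le_one_le)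
  then show ?thesis
    using assms by (auto simp: le_divide_eq max_def)
next
  case True
  moreover have "0 \<le> x / max 1 (max x a)"
    using assms by simp
  ultimately show ?thesis
    by linarith
qed

(* For x, a > 0 one has x / max 1 (max x a) = min x (min (x / a) 1); with x / a read as infinity
   when a = 0, this is the minimum on the left. *)
lemma min_mid_term_le:
  fixes m :: nat and p q :: real
  assumes "0 < m" "0 \<le> p" "p \<le> 1"
  defines "x \<equiv> real m * \<bar>p - q\<bar>"
    and "M \<equiv> max 1 (max (real m * \<bar>p - q\<bar>) (sqrt (real m * (p * (1 - p)))))"
  shows "min (ereal x) (min (mid_term m p q) 1) \<le> ereal (x / M)"
proof (cases "p * (1 - p) = 0")
  case True
  show ?thesis
  proof (cases "p = q")
    case False
    then have "min (ereal x) (min (mid_term m p q) 1) = ereal (min x 1)"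
      using True by (simp add: mid_term_def min_def)
    also have "\<dots> \<le> ereal (x / M)"
      unfolding ereal_less_eq(3) M_def x_def using True by (intro le_divide_max) auto
    finally show ?thesis .
  qed (simp add: mid_term_def True x_def)
next
  case False
  define A where "A = real m * (p * (1 - p))"
  have "x / sqrt A = sqrt (real m) * (sqrt (real m) * \<bar>p - q\<bar>) / (sqrt (real m) * sqrt (p * (1 - p)))"
    unfolding x_def A_def
    by (simp only: real_sqrt_mult real_sqrt_mult_self mult.assoc[symmetric] abs_of_nat)
  also have "\<dots> = sqrt (real m) * \<bar>p - q\<bar> / sqrt (p * (1 - p))"
    using \<open>0 < m\<close> by simp
  finally have "sqrt (real m) * \<bar>p - q\<bar> / sqrt (p * (1 - p)) = x / sqrt A"
    by simp
  then have "min (ereal x) (min (mid_term m p q) 1) = ereal (min x (min (x / sqrt A) 1))"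
    using False by (simp add: mid_term_def min_def)
  also have "\<dots> \<le> ereal (x / M)"
  proof -
    have "0 \<le> p * (1 - p)"
      using assms by simp
    then have "p * (1 - p) > 0"
      using False by linarith
    then have "A > 0"
      unfolding A_def using \<open>0 < m\<close> by simp
    moreover have "min x (min (x / sqrt A) 1) \<le> x / sqrt A"
      by simp
    ultimately have "min x (min (x / sqrt A) 1) * sqrt A \<le> x"
      by (simp add: pos_le_divide_eq)
    then show ?thesis
      unfolding ereal_less_eq(3) M_def A_def x_def by (intro le_divide_max) auto
  qed
  finally show ?thesis .
qed

lemma l1_dist_binomial_pmf:
  assumes "0 \<le> p" "p \<le> 1" "0 \<le> q" "q \<le> 1"
  shows "l1_dist (binomial_pmf n p) (binomial_pmf n q) = (\<Sum>k\<le>n. \<bar>Bernstein n k p - Bernstein n k q\<bar>)"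
proof -
  have "l1_dist (binomial_pmf n p) (binomial_pmf n q) = infsum (\<lambda>k. \<bar>Bernstein n k p - Bernstein n k q\<bar>) {..n}"
    unfolding l1_dist_def
    by (rule infsum_cong_neutral) (use assms in \<open>auto simp: Bernstein_def\<close>)
  then show ?thesis
    by simp
qed

theorem lemma8:
  fixes m :: nat and p q :: real
  assumes "m > 0" and "0 \<le> p" "p \<le> 1" and "0 \<le> q" "q \<le> 1"
  shows "ereal (l1_dist (binomial_pmf m p) (binomial_pmf m q))
           \<ge> ereal (1/350) * min (ereal (real m * \<bar>p - q\<bar>)) (min (mid_term m p q) 1)"
proof -
  define x where "x = real m * \<bar>p - q\<bar>"
  define M where "M = max 1 (max x (sqrt (real m * (p * (1 - p)))))"
  define D where "D = (\<Sum>k\<le>m. \<bar>Bernstein m k p - Bernstein m k q\<bar>)"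
  have "x \<le> 12 * M * D"
    using Bernstein_total_variation_ge[OF assms] unfolding x_def M_def D_def .
  then have "x / M \<le> 12 * D"
    unfolding M_def by (simp add: pos_divide_le_eq mult_ac)
  then have "x / M / 350 \<le> 12 * D / 350"
    by (rule divide_right_mono) simp
  also have "\<dots> \<le> D"
    unfolding D_def by (simp add: sum_nonneg)
  finally have "x / M / 350 \<le> D" .
  have "ereal (1/350) * min (ereal x) (min (mid_term m p q) 1) \<le> ereal (1/350) * ereal (x / M)"
    using min_mid_term_le[OF assms(1-3), of q] unfolding x_def M_def
    by (intro ereal_mult_left_mono) auto
  also have "\<dots> \<le> ereal D"
    using \<open>x / M / 350 \<le> D\<close> by simp
  also have "D = l1_dist (binomial_pmf m p) (binomial_pmf m q)"
    unfolding D_def using l1_dist_binomial_pmf assms by simp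
  finally show ?thesis
    unfolding x_def by simp
qed

end
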